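(* Let $X$ be a finite set. For every preference relation $\trianglerighteq$ over $2^X$ there exist a state space $S=S^+\cup S^-$ with $S^+\cap S^-=\emptyset$ and $|S|\le 2(2^{|X|}-1)$, and a function $U:X\times S\to\mathbb{R}$, such that $$V(A)=\sum_{s\in S^+}\max_{a\in A} U(a,s)-\sum_{s\in S^-}\max_{a\in A} U(a,s)$$ represents $\trianglerighteq$, i.e. $A\trianglerighteq B$ if and only if $V(A)\ge V(B)$.
   Context: A preference relation over $2^X$ (the set of menus) is a complete and transitive binary relation on $2^X$. *)

theory Defs
  imports Complex_Main
begin

text \<open>Menus: nonempty subsets of the finite set X (max over an empty menu is undefined).\<close>
definition menus :: "'a set \<Rightarrow> 'a set set" where
  "menus X = {A. A \<subseteq> X \<and> A \<noteq> {}}"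

definition preference_relation :: "'a set \<Rightarrow> ('a set \<Rightarrow> 'a set \<Rightarrow> bool) \<Rightarrow> bool" where
  "preference_relation X R \<longleftrightarrow>
     (\<forall>A\<in>menus X. \<forall>B\<in>menus X. R A B \<or> R B A) \<and>
     (\<forall>A\<in>menus X. \<forall>B\<in>menus X. \<forall>C\<in>menus X. R A B \<longrightarrow> R B C \<longrightarrow> R A C)"

definition menu_value :: "'s set \<Rightarrow> 's set \<Rightarrow> ('a \<Rightarrow> 's \<Rightarrow> real) \<Rightarrow> 'a set \<Rightarrow> real" where
  "menu_value Sp Sm U A =
     (\<Sum>s\<in>Sp. Max ((\<lambda>a. U a s) ` A)) - (\<Sum>s\<in>Sm. Max ((\<lambda>a. U a s) ` A))"

end

theory Submission
  imports Defs
begin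

text \<open>Ranking each menu by the number of menus weakly below it gives a utility v representing
  the preference. Moebius inversion on the finite poset of menus writes v A as the sum of
  coefficients c B over all menus B \<supseteq> A. Each term c B \<cdot> [A \<subseteq> B] is the difference
  of the maxima over A of two utilities that equal max (c B) 0 resp. max (- c B) 0 on B and
  \<bar>c B\<bar> off B. This gives one positive and one negative state per menu,
  2 (2 ^ card X - 1) states in all.\<close>

lemma finite_menus: "finite X \<Longrightarrow> finite (menus X)"
  unfolding menus_def by simp

lemma card_menus: "finite X \<Longrightarrow> card (menus X) = 2 ^ card X - 1"
proof -
  assume "finite X"
  moreover have "menus X = Pow X - {{}}"
    unfolding menus_def by auto
  ultimately show ?thesis
    by (simp add: card_Pow)
qed

lemma menu_finite_nonempty: "finite X \<Longrightarrow> A \<in> menus X \<Longrightarrow> finite A \<and> A \<noteq> {}"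
  unfolding menus_def using finite_subset by blast

lemma ex_utility_finite_total_preorder:
  fixes R :: "'b \<Rightarrow> 'b \<Rightarrow> bool"
  assumes fin: "finite S"
    and total: "\<forall>x\<in>S. \<forall>y\<in>S. R x y \<or> R y x"
    and trans: "\<forall>x\<in>S. \<forall>y\<in>S. \<forall>z\<in>S. R x y \<longrightarrow> R y z \<longrightarrow> R x z"
  shows "\<exists>v :: 'b \<Rightarrow> real. \<forall>x\<in>S. \<forall>y\<in>S. R x y \<longleftrightarrow> v y \<le> v x"
proof -
  define below where "below x = {z \<in> S. R x z}" for x
  have below_mono: "below y \<subseteq> below x" if "x \<in> S" "y \<in> S" "R x y" for x y
    using that trans unfolding below_def by blast
  have "R x y \<longleftrightarrow> card (below y) \<le> card (below x)" if xy: "x \<in> S" "y \<in> S" for x y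
  proof
    assume "R x y"
    then show "card (below y) \<le> card (below x)"
      using below_mono xy fin by (intro card_mono) (auto simp: below_def)
  next
    assume le: "card (below y) \<le> card (below x)"
    show "R x y"
    proof (rule ccontr)
      assume "\<not> R x y"
      then have "below x \<subset> below y"
        using below_mono[of y x] xy total unfolding below_def by blast
      then have "card (below x) < card (below y)"
        using fin by (intro psubset_card_mono) (auto simp: below_def)
      then show False
        using le by simp
    qed
  qed
  then show ?thesis
    by (intro exI[of _ "\<lambda>x. real (card (below x))"]) simp
qed

lemma ex_upper_set_sum_inversion:
  fixes v :: "'b::order \<Rightarrow> 'c::ab_group_add"
  assumes "finite F"
  shows "\<exists>c. \<forall>x\<in>F. v x = (\<Sum>y\<in>{y \<in> F. x \<le> y}. c y)"
  using assms
proof (induction F rule: finite_remove_induct)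
  case empty
  then show ?case by simp
next
  case (remove F)
  obtain m where m: "m \<in> F" and minimal: "\<forall>x\<in>F. x \<le> m \<longrightarrow> m = x"
    using finite_has_minimal[OF remove.hyps(1,2)] by blast
  obtain c where c: "\<forall>x\<in>F - {m}. v x = (\<Sum>y\<in>{y \<in> F - {m}. x \<le> y}. c y)"
    using remove.IH[OF m] by blast
  define c' where "c' = c(m := v m - (\<Sum>y\<in>{y \<in> F - {m}. m \<le> y}. c y))"
  have "v x = (\<Sum>y\<in>{y \<in> F. x \<le> y}. c' y)" if x: "x \<in> F" for x
  proof (cases "x = m")
    case True
    have "{y \<in> F. m \<le> y} = insert m {y \<in> F - {m}. m \<le> y}"
      using m by auto
    then show ?thesis
      using True remove.hyps(1) by (simp add: c'_def sum.cong[OF refl, of _ c' c])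
  next
    case False
    then have "{y \<in> F. x \<le> y} = {y \<in> F - {m}. x \<le> y}"
      using minimal x by auto
    then show ?thesis
      using c x False by (simp add: c'_def)
  qed
  then show ?case
    by blast
qed

lemma Max_image_two_valued:
  fixes x y :: "'b::linorder"
  assumes "finite A" "A \<noteq> {}" "x \<le> y"
  shows "Max ((\<lambda>a. if a \<in> B then x else y) ` A) = (if A \<subseteq> B then x else y)"
  using assms by (intro Max_eqI) (auto split: if_splits)

lemma superset_indicator_eq_Max_diff:
  fixes c :: real
  assumes "finite A" "A \<noteq> {}"
  shows "Max ((\<lambda>a. if a \<in> B then max c 0 else \<bar>c\<bar>) ` A)
           - Max ((\<lambda>a. if a \<in> B then max (- c) 0 else \<bar>c\<bar>) ` A)
         = (if A \<subseteq> B then c else 0)"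
proof -
  have "max c 0 \<le> \<bar>c\<bar>" "max (- c) 0 \<le> \<bar>c\<bar>" "max c 0 - max (- c) 0 = c"
    by auto
  then show ?thesis
    using Max_image_two_valued[OF assms, of "max c 0" "\<bar>c\<bar>" B]
      Max_image_two_valued[OF assms, of "max (- c) 0" "\<bar>c\<bar>" B]
    by (cases "A \<subseteq> B") simp_all
qed

lemma menu_value_paired_states:
  fixes N :: nat
  shows "menu_value {0..<N} {N..<2 * N} (\<lambda>a i. if i < N then u i a else w (i - N) a) A
     = (\<Sum>i<N. Max ((\<lambda>a. u i a) ` A) - Max ((\<lambda>a. w i a) ` A))"
proof -
  have "(\<Sum>s\<in>{N..<2 * N}. Max ((\<lambda>a. if s < N then u s a else w (s - N) a) ` A))
          = (\<Sum>i<N. Max ((\<lambda>a. w i a) ` A))"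
    by (rule sum.reindex_bij_witness[of _ "\<lambda>i. i + N" "\<lambda>s. s - N"]) auto
  then show ?thesis
    unfolding menu_value_def by (simp add: atLeast0LessThan sum_subtractf)
qed

lemma ex_menu_value_eq_superset_sum:
  fixes F :: "'a set set" and c :: "'a set \<Rightarrow> real"
  assumes "finite F"
  shows "\<exists>U :: 'a \<Rightarrow> nat \<Rightarrow> real. \<forall>A. finite A \<and> A \<noteq> {} \<longrightarrow>
           menu_value {0..<card F} {card F..<2 * card F} U A = (\<Sum>B\<in>{B \<in> F. A \<subseteq> B}. c B)"
proof -
  obtain f where f: "bij_betw f {0..<card F} F"
    using ex_bij_betw_nat_finite[OF assms] by blast
  define u where "u i a = (if a \<in> f i then max (c (f i)) 0 else \<bar>c (f i)\<bar>)" for i a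
  define w where "w i a = (if a \<in> f i then max (- c (f i)) 0 else \<bar>c (f i)\<bar>)" for i a
  have "menu_value {0..<card F} {card F..<2 * card F}
          (\<lambda>a i. if i < card F then u i a else w (i - card F) a) A
        = (\<Sum>B\<in>{B \<in> F. A \<subseteq> B}. c B)" if "finite A" "A \<noteq> {}" for A
  proof -
    have "menu_value {0..<card F} {card F..<2 * card F}
            (\<lambda>a i. if i < card F then u i a else w (i - card F) a) A
          = (\<Sum>i<card F. if A \<subseteq> f i then c (f i) else 0)"
      unfolding menu_value_paired_states
      using superset_indicator_eq_Max_diff[OF that] by (simp add: u_def w_def)
    also have "\<dots> = (\<Sum>B\<in>F. if A \<subseteq> B then c B else 0)"
      using sum.reindex_bij_betw[OF f, of "\<lambda>B. if A \<subseteq> B then c B else 0"]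
      by (simp add: atLeast0LessThan)
    also have "\<dots> = (\<Sum>B\<in>{B \<in> F. A \<subseteq> B}. c B)"
      using assms by (simp add: sum.inter_filter)
    finally show ?thesis .
  qed
  then show ?thesis
    by blast
qed

theorem corollary7:
  fixes X :: "'a set" and R :: "'a set \<Rightarrow> 'a set \<Rightarrow> bool"
  assumes "finite X"
    and "preference_relation X R"
  shows "\<exists>(Sp :: nat set) (Sm :: nat set) (U :: 'a \<Rightarrow> nat \<Rightarrow> real).
           finite (Sp \<union> Sm) \<and> Sp \<inter> Sm = {} \<and>
           card (Sp \<union> Sm) \<le> 2 * (2 ^ card X - 1) \<and>
           (\<forall>A\<in>menus X. \<forall>B\<in>menus X.
              R A B \<longleftrightarrow> menu_value Sp Sm U A \<ge> menu_value Sp Sm U B)"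
proof -
  define N where "N = card (menus X)"
  note preference = assms(2)[unfolded preference_relation_def]
  obtain v :: "'a set \<Rightarrow> real" where v: "\<forall>A\<in>menus X. \<forall>B\<in>menus X. R A B \<longleftrightarrow> v B \<le> v A"
    using ex_utility_finite_total_preorder[OF finite_menus[OF assms(1)]
        preference[THEN conjunct1] preference[THEN conjunct2]] by blast
  obtain c where c: "\<forall>A\<in>menus X. v A = (\<Sum>B\<in>{B \<in> menus X. A \<subseteq> B}. c B)"
    using ex_upper_set_sum_inversion[OF finite_menus[OF assms(1)]] by blast
  obtain U where U: "\<forall>A. finite A \<and> A \<noteq> {} \<longrightarrow>
      menu_value {0..<N} {N..<2 * N} U A = (\<Sum>B\<in>{B \<in> menus X. A \<subseteq> B}. c B)"
    using ex_menu_value_eq_superset_sum[OF finite_menus[OF assms(1)]] unfolding N_def by blast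
  have value_eq: "menu_value {0..<N} {N..<2 * N} U A = v A" if "A \<in> menus X" for A
    using U c menu_finite_nonempty[OF assms(1) that] that by simp
  have "{0..<N} \<union> {N..<2 * N} = {0..<2 * N}"
    by auto
  then have "card ({0..<N} \<union> {N..<2 * N}) = 2 * (2 ^ card X - 1)"
    using card_menus[OF assms(1)] by (simp add: N_def)
  moreover have "\<forall>A\<in>menus X. \<forall>B\<in>menus X. R A B \<longleftrightarrow>
      menu_value {0..<N} {N..<2 * N} U B \<le> menu_value {0..<N} {N..<2 * N} U A"
    using v value_eq by simp
  ultimately show ?thesis
    by (intro exI[of _ "{0..<N}"] exI[of _ "{N..<2 * N}"] exI[of _ U]) auto
qed

end
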